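(* Let $(g(x))_{x\ge0}$ be a semigroup acting on a real finite-dimensional vector space $V$, let $V=\bigoplus_{i=1}^nV_i$ be an SRPD, and let $V_i$ be a component of first type with eigenvalue $\lambda(x)$. Then there exists a nonzero $v\in V_i$ such that $g(x)v=\lambda(x)v$ for all $x>0$.
   Context: A semigroup is a map $g:[0,\infty)\to L(V)$ with $g(0)=\mathrm{id}$ and $g(x+y)=g(x)g(y)$ for all $x,y\ge0$. A simultaneous real primary decomposition (SRPD) is a decomposition $V=\bigoplus_{i=1}^nV_i$ into nonzero subspaces, each $g(x)$-invariant for all $x\ge0$, such that each $V_i$ is either of first type: for every $x\ge0$, $g(x)|_{V_i}$ has exactly one (complex) eigenvalue $\lambda(x)$, which is real and $\ge0$; or of second type: for every $x\ge 0$ the eigenvalues of $g(x)|_{V_i}$ lie in $\{\lambda(x),\overline{\lambda(x)}\}$ for some $\lambda(x)\in\mathbb C$, with $\lambda(x)\notin\mathbb R$ for some $x$. *)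

theory Defs
  imports "HOL-Analysis.Analysis"
begin

text \<open>A semigroup of linear maps on the real finite-dimensional space 'v, indexed by [0,\<infinity>).
  Values of g at negative arguments are irrelevant.\<close>
definition lin_semigroup :: "(real \<Rightarrow> 'v::euclidean_space \<Rightarrow> 'v) \<Rightarrow> bool" where
  "lin_semigroup g \<longleftrightarrow>
     (\<forall>x\<ge>0. linear (g x)) \<and> g 0 = id \<and>
     (\<forall>x y. x \<ge> 0 \<longrightarrow> y \<ge> 0 \<longrightarrow> g (x + y) = g x \<circ> g y)"

text \<open>mu is a (complex) eigenvalue of the restriction of the real linear map T to the
  invariant subspace W, i.e. an eigenvalue of the complexification of T|W:
  T(u + i w) = mu (u + i w) for some nonzero u + i w with u, w in W.\<close>
definition cplx_eigenvalue_on :: "('v::euclidean_space \<Rightarrow> 'v) \<Rightarrow> 'v set \<Rightarrow> complex \<Rightarrow> bool" where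
  "cplx_eigenvalue_on T W mu \<longleftrightarrow>
     (\<exists>u\<in>W. \<exists>w\<in>W. (u \<noteq> 0 \<or> w \<noteq> 0) \<and>
        T u = Re mu *\<^sub>R u - Im mu *\<^sub>R w \<and>
        T w = Im mu *\<^sub>R u + Re mu *\<^sub>R w)"

definition eigenvalues_on :: "('v::euclidean_space \<Rightarrow> 'v) \<Rightarrow> 'v set \<Rightarrow> complex set" where
  "eigenvalues_on T W = {mu. cplx_eigenvalue_on T W mu}"

definition first_type :: "(real \<Rightarrow> 'v::euclidean_space \<Rightarrow> 'v) \<Rightarrow> 'v set \<Rightarrow> bool" where
  "first_type g W \<longleftrightarrow>
     (\<forall>x\<ge>0. \<exists>l::real. l \<ge> 0 \<and> eigenvalues_on (g x) W = {complex_of_real l})"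

definition second_type :: "(real \<Rightarrow> 'v::euclidean_space \<Rightarrow> 'v) \<Rightarrow> 'v set \<Rightarrow> bool" where
  "second_type g W \<longleftrightarrow>
     (\<exists>lam::real \<Rightarrow> complex.
        (\<forall>x\<ge>0. eigenvalues_on (g x) W \<subseteq> {lam x, cnj (lam x)}) \<and>
        (\<exists>x\<ge>0. lam x \<notin> \<real>))"

text \<open>Simultaneous real primary decomposition V = V_0 + ... + V_(n-1) (direct sum).\<close>
definition SRPD :: "(real \<Rightarrow> 'v::euclidean_space \<Rightarrow> 'v) \<Rightarrow> nat \<Rightarrow> (nat \<Rightarrow> 'v set) \<Rightarrow> bool" where
  "SRPD g n Vs \<longleftrightarrow>
     (\<forall>i<n. subspace (Vs i) \<and> Vs i \<noteq> {0} \<and> (\<forall>x\<ge>0. g x ` Vs i \<subseteq> Vs i)) \<and>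
     (\<forall>y. \<exists>v. (\<forall>i<n. v i \<in> Vs i) \<and> y = (\<Sum>i<n. v i)) \<and>
     (\<forall>v. (\<forall>i<n. v i \<in> Vs i) \<and> (\<Sum>i<n. v i) = 0 \<longrightarrow> (\<forall>i<n. v i = 0)) \<and>
     (\<forall>i<n. first_type g (Vs i) \<or> second_type g (Vs i))"

end

theory Submission
  imports Defs "HOL-Computational_Algebra.Fundamental_Theorem_Algebra"
begin

text \<open>
  A nonzero invariant subspace of a real linear map always carries a complex eigenvalue: take
  a polynomial of least degree annihilating a nonzero vector, factor off a linear factor
  \<open>X - z\<close> over \<open>\<complex>\<close>, and split the cofactor into real and imaginary parts.
  For a commuting family whose only eigenvalue on \<open>W\<close> is real, the corresponding
  eigenspaces are invariant under the whole family, so induction on \<open>dim W\<close> yields a common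
  eigenvector. The operators \<open>g x\<close> of a semigroup commute, since \<open>g (x + y) = g (y + x)\<close>.
\<close>

definition poly_apply :: "real poly \<Rightarrow> ('v::real_vector \<Rightarrow> 'v) \<Rightarrow> 'v \<Rightarrow> 'v" where
  "poly_apply p T u = (\<Sum>k\<le>degree p. coeff p k *\<^sub>R (T ^^ k) u)"

lemma poly_apply_eq_sum:
  assumes "degree p \<le> N"
  shows "poly_apply p T u = (\<Sum>k\<le>N. coeff p k *\<^sub>R (T ^^ k) u)"
  unfolding poly_apply_def using assms
  by (intro sum.mono_neutral_left) (auto simp: coeff_eq_0)

lemma poly_apply_add: "poly_apply (p + q) T u = poly_apply p T u + poly_apply q T u"
proof -
  define N where "N = max (degree p) (degree q)"
  have "degree (p + q) \<le> N"
    unfolding N_def by (rule degree_add_le_max)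
  then show ?thesis
    by (subst (1 2 3) poly_apply_eq_sum[where N = N])
       (auto simp: N_def scaleR_add_left sum.distrib)
qed

lemma poly_apply_smult: "poly_apply (smult a p) T u = a *\<^sub>R poly_apply p T u"
  by (subst (1 2) poly_apply_eq_sum[where N = "degree p"])
     (auto simp: degree_smult_le scaleR_sum_right)

lemma poly_apply_const [simp]: "poly_apply [:a:] T u = a *\<^sub>R u"
  by (simp add: poly_apply_def)

lemma poly_apply_pCons_0:
  assumes "linear T"
  shows "poly_apply (pCons 0 p) T u = T (poly_apply p T u)"
proof -
  have "poly_apply (pCons 0 p) T u = (\<Sum>k\<le>Suc (degree p). coeff (pCons 0 p) k *\<^sub>R (T ^^ k) u)"
    by (rule poly_apply_eq_sum) (simp add: degree_pCons_le)
  also have "\<dots> = (\<Sum>k\<le>degree p. coeff p k *\<^sub>R (T ^^ Suc k) u)"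
    by (subst sum.atMost_Suc_shift) simp
  also have "\<dots> = T (poly_apply p T u)"
    by (simp add: poly_apply_def linear_sum[OF assms] linear_cmul[OF assms])
  finally show ?thesis .
qed

lemma poly_apply_in_subspace:
  assumes "subspace U" "T ` U \<subseteq> U" "u \<in> U"
  shows "poly_apply p T u \<in> U"
proof -
  have "(T ^^ k) u \<in> U" for k
    by (induction k) (use assms in auto)
  then show ?thesis
    unfolding poly_apply_def using assms(1) by (intro subspace_sum subspace_scale) auto
qed

lemma poly_apply_annihilator_exists:
  fixes T :: "'v::euclidean_space \<Rightarrow> 'v"
  shows "\<exists>p. p \<noteq> 0 \<and> poly_apply p T u = 0"
proof -
  define d where "d = DIM('v)"
  define f where "f k = (T ^^ k) u" for k
  have "\<exists>a. (\<exists>k\<le>d. a k \<noteq> 0) \<and> (\<Sum>k\<le>d. a k *\<^sub>R f k) = 0"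
  proof (cases "inj_on f {..d}")
    case True
    then have "card (f ` {..d}) = Suc d"
      by (simp add: card_image)
    then have "dependent (f ` {..d})"
      using independent_bound[of "f ` {..d}"] d_def by auto
    then obtain w where w: "\<exists>v\<in>f ` {..d}. w v \<noteq> 0" "(\<Sum>v\<in>f ` {..d}. w v *\<^sub>R v) = 0"
      using dependent_finite[of "f ` {..d}"] by auto
    then show ?thesis
      by (intro exI[of _ "w \<circ> f"]) (auto simp: sum.reindex[OF True])
  next
    case False
    then obtain i j where ij: "i \<le> d" "j \<le> d" "i \<noteq> j" "f i = f j"
      unfolding inj_on_def by auto
    define a where "a k = (if k = j then 1 else if k = i then -1 else (0::real))" for k
    have "(\<Sum>k\<le>d. a k *\<^sub>R f k) = (\<Sum>k\<in>{i, j}. a k *\<^sub>R f k)"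
      using ij by (intro sum.mono_neutral_right) (auto simp: a_def)
    also have "\<dots> = 0"
      using ij by (simp add: a_def)
    finally show ?thesis
      using ij by (intro exI[of _ a]) (auto simp: a_def)
  qed
  then obtain a where a: "\<exists>k\<le>d. a k \<noteq> 0" "(\<Sum>k\<le>d. a k *\<^sub>R f k) = 0"
    by blast
  define p where "p = (\<Sum>k\<le>d. monom (a k) k)"
  have coeff_p: "coeff p k = (if k \<le> d then a k else 0)" for k
    unfolding p_def by (auto simp: coeff_sum coeff_monom)
  have "degree p \<le> d"
    by (rule degree_le) (auto simp: coeff_p)
  then have "poly_apply p T u = 0"
    using a(2) by (simp add: poly_apply_eq_sum[where N = d] coeff_p f_def)
  moreover have "p \<noteq> 0"
    using a(1) coeff_p by (metis coeff_0)
  ultimately show ?thesis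
    by blast
qed

text \<open>
  Writing \<open>p = (X - z) (q\<^sub>1 + i q\<^sub>2)\<close> with real \<open>q\<^sub>1, q\<^sub>2\<close>, the two identities are the real and
  imaginary parts of this factorisation.
\<close>
lemma real_poly_complex_root_split:
  fixes p :: "real poly" and z :: complex
  assumes "p \<noteq> 0" and root: "poly (map_poly complex_of_real p) z = 0"
  obtains q1 q2 :: "real poly"
  where "q1 \<noteq> 0 \<or> q2 \<noteq> 0" "degree q1 < degree p" "degree q2 < degree p"
    and "p + smult (Re z) q1 = pCons 0 q1 + smult (Im z) q2"
    and "pCons 0 q2 = smult (Re z) q2 + smult (Im z) q1"
proof -
  define pc where "pc = map_poly complex_of_real p"
  define q where "q = synthetic_div pc z"
  define q1 where "q1 = map_poly Re q"
  define q2 where "q2 = map_poly Im q"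
  have coeff_pc: "coeff pc k = complex_of_real (coeff p k)" for k
    unfolding pc_def by (simp add: coeff_map_poly)
  have coeff_q1: "coeff q1 k = Re (coeff q k)" and coeff_q2: "coeff q2 k = Im (coeff q k)" for k
    unfolding q1_def q2_def by (simp_all add: coeff_map_poly)
  have pc_eq: "pc = [:- z, 1:] * q"
    using synthetic_div_correct'[of z pc] root unfolding pc_def q_def by simp
  have "pc \<noteq> 0"
    using \<open>p \<noteq> 0\<close> unfolding pc_def by (simp add: map_poly_eq_0_iff)
  then have "q \<noteq> 0"
    using pc_eq by auto
  then have "degree pc = Suc (degree q)"
    unfolding pc_eq by (subst degree_mult_eq) auto
  then have deg_q: "degree q < degree p"
    unfolding pc_def by (simp add: degree_map_poly)
  have coeff_pc_q: "coeff pc k = - z * coeff q k + coeff (pCons 0 q) k" for k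
    unfolding pc_eq by simp
  show thesis
  proof
    show "q1 \<noteq> 0 \<or> q2 \<noteq> 0"
      using \<open>q \<noteq> 0\<close> coeff_q1 coeff_q2 by (metis complex_eq_iff poly_eqI coeff_0 zero_complex.sel)
    show "degree q1 < degree p" "degree q2 < degree p"
      using deg_q coeff_eq_0[of q] degree_le[of "degree q" q1] degree_le[of "degree q" q2]
      by (auto simp: coeff_q1 coeff_q2)
    show "p + smult (Re z) q1 = pCons 0 q1 + smult (Im z) q2"
    proof (rule poly_eqI)
      fix k
      have "Re (coeff pc k) = Re (- z * coeff q k + coeff (pCons 0 q) k)"
        by (simp add: coeff_pc_q)
      then show "coeff (p + smult (Re z) q1) k = coeff (pCons 0 q1 + smult (Im z) q2) k"
        by (cases k) (simp_all add: coeff_pc coeff_q1 coeff_q2 coeff_pCons)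
    qed
    show "pCons 0 q2 = smult (Re z) q2 + smult (Im z) q1"
    proof (rule poly_eqI)
      fix k
      have "Im (coeff pc k) = Im (- z * coeff q k + coeff (pCons 0 q) k)"
        by (simp add: coeff_pc_q)
      then show "coeff (pCons 0 q2) k = coeff (smult (Re z) q2 + smult (Im z) q1) k"
        by (cases k) (simp_all add: coeff_pc coeff_q1 coeff_q2 coeff_pCons algebra_simps)
    qed
  qed
qed

lemma cplx_eigenvalue_on_exists:
  fixes T :: "'v::euclidean_space \<Rightarrow> 'v"
  assumes T: "linear T" and U: "subspace U" "T ` U \<subseteq> U" "U \<noteq> {0}"
  shows "\<exists>mu. cplx_eigenvalue_on T U mu"
proof -
  obtain u where u: "u \<in> U" "u \<noteq> 0"
    using U subspace_0 by blast
  obtain p where p: "p \<noteq> 0" "poly_apply p T u = 0"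
    and least: "\<And>r. r \<noteq> 0 \<Longrightarrow> poly_apply r T u = 0 \<Longrightarrow> degree p \<le> degree r"
    using ex_has_least_nat[where m = degree and P = "\<lambda>r. r \<noteq> 0 \<and> poly_apply r T u = 0"]
      poly_apply_annihilator_exists[of T u] by blast
  have "degree p \<noteq> 0"
    using p u by (metis degree_eq_zeroE pCons_eq_0_iff poly_apply_const scale_eq_0_iff)
  then have "degree (map_poly complex_of_real p) \<noteq> 0"
    by (simp add: degree_map_poly)
  then obtain z where root: "poly (map_poly complex_of_real p) z = 0"
    using fundamental_theorem_of_algebra constant_degree by metis
  obtain q1 q2 where q: "q1 \<noteq> 0 \<or> q2 \<noteq> 0" "degree q1 < degree p" "degree q2 < degree p"
    and eq1: "p + smult (Re z) q1 = pCons 0 q1 + smult (Im z) q2"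
    and eq2: "pCons 0 q2 = smult (Re z) q2 + smult (Im z) q1"
    using real_poly_complex_root_split[OF p(1) root] by blast
  define v1 where "v1 = poly_apply q1 T u"
  define v2 where "v2 = poly_apply q2 T u"
  have "T v1 = Re z *\<^sub>R v1 - Im z *\<^sub>R v2"
    using arg_cong[OF eq1, of "\<lambda>r. poly_apply r T u"] p(2)
    by (simp add: poly_apply_add poly_apply_smult poly_apply_pCons_0[OF T] v1_def v2_def
        algebra_simps)
  moreover have "T v2 = Im z *\<^sub>R v1 + Re z *\<^sub>R v2"
    using arg_cong[OF eq2, of "\<lambda>r. poly_apply r T u"]
    by (simp add: poly_apply_add poly_apply_smult poly_apply_pCons_0[OF T] v1_def v2_def
        algebra_simps)
  moreover have "v1 \<noteq> 0 \<or> v2 \<noteq> 0"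
    using q least[of q1] least[of q2] unfolding v1_def v2_def by fastforce
  moreover have "v1 \<in> U" "v2 \<in> U"
    unfolding v1_def v2_def using poly_apply_in_subspace U u by auto
  ultimately have "cplx_eigenvalue_on T U z"
    unfolding cplx_eigenvalue_on_def by (intro bexI[of _ v1] bexI[of _ v2]) auto
  then show ?thesis ..
qed

lemma cplx_eigenvalue_on_of_real:
  assumes "cplx_eigenvalue_on T U (complex_of_real l)"
  shows "\<exists>v\<in>U. v \<noteq> 0 \<and> T v = l *\<^sub>R v"
  using assms unfolding cplx_eigenvalue_on_def by auto

lemma eigenvalues_on_mono: "U \<subseteq> W \<Longrightarrow> eigenvalues_on T U \<subseteq> eigenvalues_on T W"
  unfolding eigenvalues_on_def cplx_eigenvalue_on_def by blast

lemma common_eigenvector_commuting: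
  fixes T :: "'s \<Rightarrow> 'v::euclidean_space \<Rightarrow> 'v" and l :: "'s \<Rightarrow> real"
  assumes lin: "\<And>s. s \<in> S \<Longrightarrow> linear (T s)"
    and comm: "\<And>s t v. s \<in> S \<Longrightarrow> t \<in> S \<Longrightarrow> T s (T t v) = T t (T s v)"
    and "subspace W" "W \<noteq> {0}" "\<And>s. s \<in> S \<Longrightarrow> T s ` W \<subseteq> W"
    and "\<And>s. s \<in> S \<Longrightarrow> eigenvalues_on (T s) W \<subseteq> {complex_of_real (l s)}"
  shows "\<exists>v\<in>W. v \<noteq> 0 \<and> (\<forall>s\<in>S. T s v = l s *\<^sub>R v)"
  using assms(3-)
proof (induction "dim W" arbitrary: W rule: less_induct)
  case less
  show ?case
  proof (cases "\<exists>s\<in>S. \<exists>w\<in>W. T s w \<noteq> l s *\<^sub>R w")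
    case False
    then show ?thesis
      using less.prems(1,2) subspace_0 by blast
  next
    case True
    then obtain s where s: "s \<in> S" and moved: "\<exists>w\<in>W. T s w \<noteq> l s *\<^sub>R w"
      by blast
    define E where "E = {v \<in> W. T s v = l s *\<^sub>R v}"
    have "subspace E"
      using less.prems(1) lin[OF s]
      by (auto simp: E_def subspace_def linear_add linear_cmul linear_0 algebra_simps)
    have E_invariant: "T t ` E \<subseteq> E" if t: "t \<in> S" for t
      using less.prems(3)[OF t] comm[OF s t] lin[OF t]
      by (auto simp: E_def linear_cmul)
    obtain mu where "cplx_eigenvalue_on (T s) W mu"
      using cplx_eigenvalue_on_exists[OF lin[OF s] less.prems(1) less.prems(3)[OF s]]
        less.prems(2) by blast
    then have "cplx_eigenvalue_on (T s) W (complex_of_real (l s))"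
      using less.prems(4)[OF s] unfolding eigenvalues_on_def by auto
    then have "E \<noteq> {0}"
      using cplx_eigenvalue_on_of_real unfolding E_def by blast
    moreover have "E \<subset> W"
      using moved unfolding E_def by blast
    then have "dim E < dim W"
      using dim_psubset[of E W] \<open>subspace E\<close> less.prems(1) by (metis span_eq_iff)
    moreover have "eigenvalues_on (T t) E \<subseteq> {complex_of_real (l t)}" if "t \<in> S" for t
      using eigenvalues_on_mono[of E W] \<open>E \<subset> W\<close> less.prems(4)[OF that] by blast
    ultimately obtain v where "v \<in> E" "v \<noteq> 0" "\<forall>t\<in>S. T t v = l t *\<^sub>R v"
      using less.hyps[of E] \<open>subspace E\<close> E_invariant by blast
    then show ?thesis
      using \<open>E \<subset> W\<close> by blast
  qed
qed

lemma lin_semigroup_commute: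
  assumes "lin_semigroup g" "x \<ge> 0" "y \<ge> 0"
  shows "g x (g y v) = g y (g x v)"
proof -
  have "g (x + y) = g x \<circ> g y" "g (y + x) = g y \<circ> g x"
    using assms unfolding lin_semigroup_def by auto
  then show ?thesis
    by (metis add.commute comp_apply)
qed

theorem mainTheorem3:
  fixes g :: "real \<Rightarrow> 'v::euclidean_space \<Rightarrow> 'v"
    and Vs :: "nat \<Rightarrow> 'v set" and n i :: nat and lam :: "real \<Rightarrow> real"
  assumes "lin_semigroup g"
    and "SRPD g n Vs"
    and "i < n"
    and "first_type g (Vs i)"
    and "\<forall>x\<ge>0. lam x \<ge> 0 \<and> eigenvalues_on (g x) (Vs i) = {complex_of_real (lam x)}"
  shows "\<exists>v\<in>Vs i. v \<noteq> 0 \<and> (\<forall>x>0. g x v = lam x *\<^sub>R v)"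
proof -
  have lin: "linear (g x)" if "x \<in> {0<..}" for x
    using assms(1) that unfolding lin_semigroup_def by simp
  have comm: "g x (g y v) = g y (g x v)" if "x \<in> {0<..}" "y \<in> {0<..}" for x y v
    using lin_semigroup_commute[OF assms(1)] that by simp
  have W: "subspace (Vs i)" "Vs i \<noteq> {0}"
    using assms(2,3) unfolding SRPD_def by auto
  have inv: "g x ` Vs i \<subseteq> Vs i" if "x \<in> {0<..}" for x
    using assms(2,3) that unfolding SRPD_def by auto
  have eig: "eigenvalues_on (g x) (Vs i) \<subseteq> {complex_of_real (lam x)}" if "x \<in> {0<..}" for x
    using assms(5) that by simp
  show ?thesis
    using common_eigenvector_commuting[of "{0<..}" g "Vs i" lam, OF lin comm W inv eig] by auto
qed

end
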